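(* Let $(X,d)$ be a metric space and let $u\in F_{USCG}(X)$. Then $P_0(u)=P(u)$, and $P(u)$ is at most countable.
   Context: A fuzzy set on $X$ is a function $u:X\to[0,1]$, with $\alpha$-cuts $[u]_\alpha=\{x: u(x)\ge\alpha\}$ for $\alpha\in(0,1]$ and $[u]_0=\overline{\{u>0\}}$. $F_{USC}(X)$ is the set of fuzzy sets with all $\alpha$-cuts ($\alpha\in[0,1]$) non-empty and closed; $F_{USCG}(X)=\{u\in F_{USC}(X): [u]_\alpha \text{ is compact for all } \alpha\in(0,1]\}$. $H$ denotes the Hausdorff metric on non-empty closed subsets of $X$: $H(U,V)=\max\{\sup_{u\in U}d(u,V),\sup_{v\in V}d(v,U)\}$. A number $\alpha\in(0,1)$ is a platform point of $u$ if $\overline{\{u>\alpha\}}\subsetneqq[u]_\alpha$; $P(u)$ is the set of platform points of $u$. $P_0(u)=\{\alpha\in(0,1): \lim_{\beta\to\alpha}H([u]_\beta,[u]_\alpha)\neq 0\}$, i.e. the set of $\alpha\in(0,1)$ at which it is not the case that $H([u]_\beta,[u]_\alpha)\to0$ as $\beta\to\alpha$. *)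

theory Defs
  imports "HOL-Analysis.Analysis"
begin

definition fuzzy_set :: "('a \<Rightarrow> real) \<Rightarrow> bool" where
  "fuzzy_set u \<longleftrightarrow> (\<forall>x. 0 \<le> u x \<and> u x \<le> 1)"

definition cut :: "('a::topological_space \<Rightarrow> real) \<Rightarrow> real \<Rightarrow> 'a set" where
  "cut u \<alpha> = (if \<alpha> = 0 then closure {x. u x > 0} else {x. u x \<ge> \<alpha>})"

definition F_USC :: "('a::topological_space \<Rightarrow> real) \<Rightarrow> bool" where
  "F_USC u \<longleftrightarrow> fuzzy_set u \<and>
     (\<forall>\<alpha>\<in>{0..1}. cut u \<alpha> \<noteq> {} \<and> closed (cut u \<alpha>))"

definition F_USCG :: "('a::topological_space \<Rightarrow> real) \<Rightarrow> bool" where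
  "F_USCG u \<longleftrightarrow> F_USC u \<and> (\<forall>\<alpha>\<in>{0<..1}. compact (cut u \<alpha>))"

definition hausdorff :: "'a::metric_space set \<Rightarrow> 'a set \<Rightarrow> ereal" where
  "hausdorff U V = max (SUP x\<in>U. ereal (infdist x V)) (SUP y\<in>V. ereal (infdist y U))"

definition platform_points :: "('a::topological_space \<Rightarrow> real) \<Rightarrow> real set" where
  "platform_points u = {\<alpha>. 0 < \<alpha> \<and> \<alpha> < 1 \<and> closure {x. u x > \<alpha>} \<subset> cut u \<alpha>}"

definition P0 :: "('a::metric_space \<Rightarrow> real) \<Rightarrow> real set" where
  "P0 u = {\<alpha>. 0 < \<alpha> \<and> \<alpha> < 1 \<and>
      \<not> ((\<lambda>\<beta>. hausdorff (cut u \<beta>) (cut u \<alpha>)) \<longlongrightarrow> 0) (at \<alpha> within {0..1})}"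

end

theory Submission
  imports Defs
begin

text \<open>
  From the left, the cuts of \<open>u\<close> at levels \<open>b \<uparrow> a\<close> decrease to the cut at \<open>a\<close>; inside the
  compact cut at \<open>a/2\<close>, upper semicontinuity of \<open>u\<close> turns this into Hausdorff convergence.
  From the right, the cuts at levels \<open>b \<down> a\<close> increase to \<open>{u > a}\<close>, and by compactness of the
  cut at \<open>a\<close> they converge to it exactly when \<open>{u > a}\<close> is dense in it, i.e. when \<open>a\<close> is not a
  platform point; otherwise a point of the cut at distance \<open>r > 0\<close> from \<open>{u > a}\<close> keeps the
  Hausdorff distance above \<open>r\<close>.  Such points \<open>x\<^sub>a\<close>, for platform points \<open>a \<ge> c\<close> with
  \<open>r\<^sub>a \<ge> r\<close>, are \<open>r\<close>-separated in the compact cut at \<open>c\<close>, hence finitely many; so there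
  are only countably many platform points.
\<close>

lemma finite_if_separated_in_compact:
  fixes S :: "'a::metric_space set"
  assumes "compact K" "S \<subseteq> K" "0 < d"
    and separated: "\<And>x y. x \<in> S \<Longrightarrow> y \<in> S \<Longrightarrow> x \<noteq> y \<Longrightarrow> d \<le> dist x y"
  shows "finite S"
proof (rule ccontr)
  assume "infinite S"
  then obtain x where "x islimpt S"
    using assms(1,2) unfolding compact_eq_Bolzano_Weierstrass by blast
  then have near: "infinite (S \<inter> ball x (d/2))"
    using \<open>0 < d\<close> by (simp add: islimpt_eq_infinite_ball)
  then obtain y where y: "y \<in> S \<inter> ball x (d/2)"
    using infinite_imp_nonempty by blast
  from near have "infinite (S \<inter> ball x (d/2) - {y})"
    by simp
  then obtain z where z: "z \<in> S \<inter> ball x (d/2)" "z \<noteq> y"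
    using infinite_imp_nonempty by blast
  have "dist y z < d"
    using y z dist_triangle_half_r[of x y d z] by auto
  with separated y z show False
    by force
qed

lemma compact_in_closure_finite_net:
  fixes C :: "'a::metric_space set"
  assumes "compact C" "C \<subseteq> closure S" "0 < e"
  obtains F where "finite F" "F \<subseteq> S" "\<And>x. x \<in> C \<Longrightarrow> \<exists>y\<in>F. dist x y < e"
proof -
  obtain K where K: "finite K" "K \<subseteq> C" "C \<subseteq> (\<Union>k\<in>K. ball k (e/2))"
    using seq_compact_imp_totally_bounded[OF compact_imp_seq_compact[OF assms(1)]] \<open>0 < e\<close>
    by (meson half_gt_zero)
  have "\<forall>k\<in>K. \<exists>y\<in>S. dist y k < e/2"
    using K(2) assms(2,3) closure_approachable by (metis half_gt_zero subsetD)
  then obtain f where f: "\<And>k. k \<in> K \<Longrightarrow> f k \<in> S \<and> dist (f k) k < e/2"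
    by metis
  show thesis
  proof
    show "finite (f ` K)" "f ` K \<subseteq> S"
      using K(1) f by auto
  next
    fix x assume "x \<in> C"
    then obtain k where "k \<in> K" "dist k x < e/2"
      using K(3) by auto
    then have "dist x (f k) < e"
      using f[of k] dist_triangle_half_l[of x k e "f k"] by (simp add: dist_commute)
    then show "\<exists>y\<in>f ` K. dist x y < e"
      using \<open>k \<in> K\<close> by blast
  qed
qed

lemma compact_uniformly_less:
  fixes u :: "'a::topological_space \<Rightarrow> real"
  assumes "compact T" "\<And>y. y \<in> T \<Longrightarrow> u y < a"
    and open_sublevel: "\<And>c. c < a \<Longrightarrow> open {y. u y < c}"
  shows "\<exists>c<a. \<forall>y\<in>T. u y < c"
proof -
  have "T \<subseteq> (\<Union>c\<in>{..<a}. {y. u y < c})"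
  proof
    fix y assume "y \<in> T"
    then show "y \<in> (\<Union>c\<in>{..<a}. {y. u y < c})"
      using assms(2)[of y] by (intro UN_I[of "(u y + a)/2"]) auto
  qed
  then obtain C where C: "C \<subseteq> {..<a}" "finite C" "T \<subseteq> (\<Union>c\<in>C. {y. u y < c})"
    using compactE_image[OF assms(1), of "{..<a}" "\<lambda>c. {y. u y < c}"] open_sublevel by auto
  define c where "c = Max (insert (a - 1) C)"
  have "c < a"
    using C by (simp add: c_def subset_eq)
  moreover have "u y < c" if "y \<in> T" for y
  proof -
    obtain c' where "c' \<in> C" "u y < c'"
      using C(3) \<open>y \<in> T\<close> by auto
    moreover have "c' \<le> c"
      unfolding c_def using C(2) \<open>c' \<in> C\<close> by (intro Max_ge) auto
    ultimately show ?thesis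
      by linarith
  qed
  ultimately show ?thesis
    by blast
qed

lemma ereal_tendsto_zeroI:
  fixes f :: "'b \<Rightarrow> ereal"
  assumes "eventually (\<lambda>x. 0 \<le> f x) F"
    and "\<And>e. 0 < e \<Longrightarrow> eventually (\<lambda>x. f x \<le> ereal e) F"
  shows "(f \<longlongrightarrow> 0) F"
proof (rule order_tendstoI)
  fix c :: ereal assume "c < 0"
  with assms(1) show "eventually (\<lambda>x. c < f x) F"
    by (auto elim: eventually_mono)
next
  fix c :: ereal assume "0 < c"
  then obtain z where "0 < ereal z" "ereal z < c"
    using ereal_dense2 by blast
  with assms(2)[of z] show "eventually (\<lambda>x. f x < c) F"
    by (auto elim: eventually_mono)
qed

lemma hausdorff_commute: "hausdorff U V = hausdorff V U"
  by (simp add: hausdorff_def max.commute)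

lemma hausdorff_nonneg: "U \<noteq> {} \<Longrightarrow> 0 \<le> hausdorff U V"
  unfolding hausdorff_def
  by (metis SUP_upper all_not_in_conv ereal_less_eq(5) infdist_nonneg max.coboundedI1 order_trans)

lemma infdist_le_hausdorff: "y \<in> V \<Longrightarrow> ereal (infdist y U) \<le> hausdorff U V"
  unfolding hausdorff_def by (auto intro: SUP_upper max.coboundedI2)

lemma hausdorff_le_if_subset:
  assumes "V \<subseteq> U" "0 \<le> e" "\<And>x. x \<in> U \<Longrightarrow> infdist x V \<le> e"
  shows "hausdorff U V \<le> ereal e"
  unfolding hausdorff_def using assms by (auto intro!: SUP_least)

lemma cut_eq_superlevel: "0 < a \<Longrightarrow> cut u a = {x. a \<le> u x}"
  by (simp add: cut_def)

lemma cut_antimono: "0 < a \<Longrightarrow> a \<le> b \<Longrightarrow> cut u b \<subseteq> cut u a"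
  by (auto simp: cut_eq_superlevel)

lemma F_USCG_cut:
  assumes "F_USCG u" "0 < a" "a \<le> 1"
  shows "compact (cut u a)" "closed (cut u a)" "cut u a \<noteq> {}"
  using assms unfolding F_USCG_def F_USC_def by auto

lemma F_USCG_open_sublevel:
  assumes "F_USCG u" "c \<le> 1"
  shows "open {x. u x < c}"
proof (cases "0 < c")
  case True
  then have "{x. u x < c} = - cut u c"
    by (auto simp: cut_eq_superlevel)
  then show ?thesis
    using F_USCG_cut(2)[OF assms(1) True assms(2)] by (simp add: open_Compl)
next
  case False
  have "c \<le> u x" for x
    using assms(1) False by (simp add: F_USCG_def F_USC_def fuzzy_set_def) (meson not_le order_trans)
  then have "{x. u x < c} = {}"
    by (simp add: not_less)
  then show ?thesis
    by simp
qed

lemma F_USCG_superlevel_nonempty: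
  assumes "F_USCG u" "a < 1"
  shows "{x. a < u x} \<noteq> {}"
proof -
  obtain x where "x \<in> cut u 1"
    using F_USCG_cut(3)[OF assms(1), of 1] by auto
  with assms(2) have "x \<in> {x. a < u x}"
    by (simp add: cut_eq_superlevel)
  then show ?thesis
    by blast
qed

lemma tendsto_hausdorff_cut_at_left:
  fixes u :: "'a::metric_space \<Rightarrow> real"
  assumes F: "F_USCG u" and a: "0 < a" "a \<le> 1"
  shows "((\<lambda>b. hausdorff (cut u b) (cut u a)) \<longlongrightarrow> 0) (at_left a)"
proof (rule ereal_tendsto_zeroI)
  show "eventually (\<lambda>b. 0 \<le> hausdorff (cut u b) (cut u a)) (at_left a)"
    using eventually_at_left_real[OF a(1)]
    by eventually_elim (use F_USCG_cut[OF F] a in \<open>auto intro: hausdorff_nonneg\<close>)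
next
  fix e :: real assume "0 < e"
  define T where "T = cut u (a/2) \<inter> {y. e \<le> infdist y (cut u a)}"
  have "compact T"
    unfolding T_def using F_USCG_cut(1)[OF F] a
    by (intro compact_Int_closed closed_Collect_le continuous_intros) auto
  moreover have "u y < a" if "y \<in> T" for y
  proof (rule ccontr)
    assume "\<not> u y < a"
    with a(1) have "y \<in> cut u a"
      by (simp add: cut_eq_superlevel)
    with that \<open>0 < e\<close> show False
      by (simp add: T_def)
  qed
  ultimately obtain c where c: "c < a" "\<And>y. y \<in> T \<Longrightarrow> u y < c"
    using compact_uniformly_less[of T u a] F_USCG_open_sublevel[OF F] a(2) by force
  have "eventually (\<lambda>b. b \<in> {max c (a/2)<..<a}) (at_left a)"
    using c(1) a(1) by (intro eventually_at_left_real) auto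
  then show "eventually (\<lambda>b. hausdorff (cut u b) (cut u a) \<le> ereal e) (at_left a)"
  proof eventually_elim
    case (elim b)
    have "infdist y (cut u a) \<le> e" if "y \<in> cut u b" for y
    proof (rule ccontr)
      assume "\<not> infdist y (cut u a) \<le> e"
      with that elim a(1) have "y \<in> T"
        by (auto simp: T_def cut_eq_superlevel)
      with c(2)[of y] that elim a(1) show False
        by (auto simp: cut_eq_superlevel)
    qed
    then show ?case
      using cut_antimono[of b a u] elim a(1) \<open>0 < e\<close> by (auto intro: hausdorff_le_if_subset)
  qed
qed

lemma tendsto_hausdorff_cut_at_right:
  fixes u :: "'a::metric_space \<Rightarrow> real"
  assumes F: "F_USCG u" and a: "0 < a" "a < 1"
    and dense: "cut u a \<subseteq> closure {x. a < u x}"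
  shows "((\<lambda>b. hausdorff (cut u b) (cut u a)) \<longlongrightarrow> 0) (at_right a)"
proof (rule ereal_tendsto_zeroI)
  show "eventually (\<lambda>b. 0 \<le> hausdorff (cut u b) (cut u a)) (at_right a)"
    using eventually_at_right_real[OF a(2)]
    by eventually_elim (use F_USCG_cut[OF F] a in \<open>auto intro: hausdorff_nonneg\<close>)
next
  fix e :: real assume "0 < e"
  obtain N where N: "finite N" "N \<subseteq> {x. a < u x}"
    and net: "\<And>x. x \<in> cut u a \<Longrightarrow> \<exists>y\<in>N. dist x y < e"
    using compact_in_closure_finite_net[OF F_USCG_cut(1)[OF F a(1)] dense \<open>0 < e\<close>] a(2)
    by auto
  define g where "g = Min (insert 1 (u ` N))"
  have "a < g"
    using N a(2) by (auto simp: g_def)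
  have N_cut: "N \<subseteq> cut u b" if "0 < b" "b < g" for b
    using that N(1) by (auto simp: g_def cut_eq_superlevel)
  have "eventually (\<lambda>b. b \<in> {a<..<g}) (at_right a)"
    using \<open>a < g\<close> by (rule eventually_at_right_real)
  then show "eventually (\<lambda>b. hausdorff (cut u b) (cut u a) \<le> ereal e) (at_right a)"
  proof eventually_elim
    case (elim b)
    show ?case
      unfolding hausdorff_commute[of "cut u b"]
    proof (rule hausdorff_le_if_subset)
      show "cut u b \<subseteq> cut u a"
        using elim a(1) by (intro cut_antimono) auto
    next
      fix x assume "x \<in> cut u a"
      then obtain y where "y \<in> N" "dist x y < e"
        using net by blast
      then show "infdist x (cut u b) \<le> e"
        using N_cut[of b] elim a(1) by (auto intro: infdist_le2)
    qed (use \<open>0 < e\<close> in simp)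
  qed
qed

lemma platform_point_witness:
  fixes u :: "'a::metric_space \<Rightarrow> real"
  assumes F: "F_USCG u" and p: "a \<in> platform_points u"
  obtains x where "u x = a" "0 < infdist x {y. a < u y}"
proof -
  have a: "0 < a" "a < 1"
    using p by (auto simp: platform_points_def)
  obtain x where x: "x \<in> cut u a" "x \<notin> closure {y. a < u y}"
    using p by (auto simp: platform_points_def)
  show thesis
  proof
    show "u x = a"
      using x a(1) closure_subset[of "{y. a < u y}"] by (force simp: cut_eq_superlevel)
    show "0 < infdist x {y. a < u y}"
      using x(2) F_USCG_superlevel_nonempty[OF F a(2)] in_closure_iff_infdist_zero infdist_nonneg
      by (metis order_le_less)
  qed
qed

lemma platform_point_not_tendsto:
  fixes u :: "'a::metric_space \<Rightarrow> real"
  assumes F: "F_USCG u" and p: "a \<in> platform_points u"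
  shows "\<not> ((\<lambda>b. hausdorff (cut u b) (cut u a)) \<longlongrightarrow> 0) (at a within {0..1})"
proof
  assume lim: "((\<lambda>b. hausdorff (cut u b) (cut u a)) \<longlongrightarrow> 0) (at a within {0..1})"
  have a: "0 < a" "a < 1"
    using p by (auto simp: platform_points_def)
  obtain x where x: "u x = a" and r: "0 < infdist x {y. a < u y}"
    using platform_point_witness[OF F p] .
  have "((\<lambda>b. hausdorff (cut u b) (cut u a)) \<longlongrightarrow> 0) (at_right a)"
    using tendsto_within_subset[OF lim, of "{a..1}"] a by (simp add: at_within_Icc_at_right)
  moreover have "eventually (\<lambda>b. ereal (infdist x {y. a < u y}) \<le> hausdorff (cut u b) (cut u a))
      (at_right a)"
    using eventually_at_right_real[OF a(2)]
  proof eventually_elim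
    case (elim b)
    have "infdist x {y. a < u y} \<le> infdist x (cut u b)"
      using elim a(1) F_USCG_cut(3)[OF F, of b] by (intro infdist_mono) (auto simp: cut_eq_superlevel)
    also have "ereal (infdist x (cut u b)) \<le> hausdorff (cut u b) (cut u a)"
      using x a(1) by (intro infdist_le_hausdorff) (simp add: cut_eq_superlevel)
    finally show ?case
      by simp
  qed
  ultimately have "ereal (infdist x {y. a < u y}) \<le> 0"
    by (rule tendsto_lowerbound) simp
  with r show False
    by simp
qed

lemma tendsto_unless_platform_point:
  fixes u :: "'a::metric_space \<Rightarrow> real"
  assumes F: "F_USCG u" and a: "0 < a" "a < 1" and np: "a \<notin> platform_points u"
  shows "((\<lambda>b. hausdorff (cut u b) (cut u a)) \<longlongrightarrow> 0) (at a within {0..1})"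
proof -
  have "closure {x. a < u x} \<subseteq> cut u a"
    using F_USCG_cut(2)[OF F a(1)] a
    by (intro closure_minimal) (auto simp: cut_eq_superlevel)
  with np a have "cut u a \<subseteq> closure {x. a < u x}"
    by (auto simp: platform_points_def)
  then have "((\<lambda>b. hausdorff (cut u b) (cut u a)) \<longlongrightarrow> 0) (at a)"
    using tendsto_hausdorff_cut_at_left[OF F a(1)] tendsto_hausdorff_cut_at_right[OF F a] a
    by (intro filterlim_split_at) auto
  then show ?thesis
    by (rule tendsto_within_subset) simp
qed

lemma countable_platform_points:
  fixes u :: "'a::metric_space \<Rightarrow> real"
  assumes F: "F_USCG u"
  shows "countable (platform_points u)"
proof -
  let ?P = "platform_points u"
  have "\<forall>a\<in>?P. \<exists>x. u x = a \<and> 0 < infdist x {y. a < u y}"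
    using platform_point_witness[OF F] by blast
  then obtain X where X: "\<And>a. a \<in> ?P \<Longrightarrow> u (X a) = a \<and> 0 < infdist (X a) {y. a < u y}"
    by (auto dest!: bchoice)
  define R where "R a = infdist (X a) {y. a < u y}" for a
  have below: "R a \<le> dist (X a) (X a')" if "a \<in> ?P" "a' \<in> ?P" "a < a'" for a a'
    unfolding R_def using X[OF that(2)] that(3) by (intro infdist_le) simp
  have separated: "min (R a) (R a') \<le> dist (X a) (X a')"
    if "a \<in> ?P" "a' \<in> ?P" "a \<noteq> a'" for a a'
    using below[OF that(1,2)] below[OF that(2,1)] that(3) by (cases "a < a'") (auto simp: dist_commute)
  define Q where "Q n m = {a \<in> ?P. inverse (Suc n) \<le> a \<and> inverse (Suc m) \<le> R a}" for n m :: nat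
  have "finite (Q n m)" for n m
  proof -
    have "finite (X ` Q n m)"
    proof (rule finite_if_separated_in_compact)
      show "compact (cut u (inverse (Suc n)))"
        by (intro F_USCG_cut(1)[OF F]) (simp_all add: inverse_le_1_iff)
      show "X ` Q n m \<subseteq> cut u (inverse (Suc n))"
        using X by (auto simp: Q_def cut_eq_superlevel)
    next
      fix x y assume "x \<in> X ` Q n m" "y \<in> X ` Q n m" "x \<noteq> y"
      then obtain a a' where "a \<in> Q n m" "a' \<in> Q n m" "x = X a" "y = X a'" "a \<noteq> a'"
        by blast
      then show "inverse (Suc m) \<le> dist x y"
        using separated[of a a'] by (auto simp: Q_def)
    qed simp
    moreover have "inj_on X (Q n m)"
      using X by (intro inj_onI) (metis Q_def mem_Collect_eq)
    ultimately show ?thesis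
      by (rule finite_imageD)
  qed
  moreover have "?P \<subseteq> (\<Union>n. \<Union>m. Q n m)"
  proof
    fix a assume "a \<in> ?P"
    moreover obtain n where "inverse (Suc n) < a"
      using \<open>a \<in> ?P\<close> reals_Archimedean by (auto simp: platform_points_def)
    moreover obtain m where "inverse (Suc m) < R a"
      using X[OF \<open>a \<in> ?P\<close>] reals_Archimedean by (auto simp: R_def)
    ultimately have "a \<in> Q n m"
      by (simp add: Q_def)
    then show "a \<in> (\<Union>n. \<Union>m. Q n m)"
      by blast
  qed
  ultimately show ?thesis
    by (simp add: countable_finite countable_subset)
qed

theorem lemma3p5:
  fixes u :: "'a::metric_space \<Rightarrow> real"
  assumes "F_USCG u"
  shows "P0 u = platform_points u \<and> countable (platform_points u)"
proof
  have "a \<in> P0 u \<longleftrightarrow> a \<in> platform_points u" for a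
    using platform_point_not_tendsto[OF assms, of a] tendsto_unless_platform_point[OF assms, of a]
    by (auto simp: P0_def platform_points_def)
  then show "P0 u = platform_points u"
    by blast
  show "countable (platform_points u)"
    using countable_platform_points[OF assms] .
qed

end
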